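(* Let $(a_{n,i})_{n\ge1,1\le i\le n}$ be a deterministic array with $\sum_{i=1}^n|a_{n,i}|^2\le\frac{4}{n}$ for all $n$, and let $\gamma>0$. Let $V_1,V_2,\ldots$ be independent random variables with $V_i\sim\mathbb{P}_{V_i}$. Then $$\lim_{n\to\infty}\ \sup_{\mathbb{P}_{V_1},\ldots,\mathbb{P}_{V_n}\in\mathcal{D}_{1+\gamma}}\mathbb{E}\Bigl[\Bigl|\sum_{i=1}^n a_{n,i}\bigl(V_i-\mathbb{E}[V_i]\bigr)\Bigr|\Bigr]=0.$$
   Context: For $s>0$, $\mathcal{D}_s$ is the class of distributions of $\xi$ with $\mathbb{E}[\xi]=0$ and $1\le\mathbb{E}[|\xi|^s]\le2$. *)

theory Defs
  imports "HOL-Probability.Probability"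
begin

definition dist_class :: "real \<Rightarrow> real measure set" where
  "dist_class s = {M. prob_space M \<and> sets M = sets borel \<and>
      integrable M (\<lambda>x. x) \<and> (\<integral>x. x \<partial>M) = 0 \<and>
      1 \<le> (\<integral>\<^sup>+ x. ennreal (\<bar>x\<bar> powr s) \<partial>M) \<and>
      (\<integral>\<^sup>+ x. ennreal (\<bar>x\<bar> powr s) \<partial>M) \<le> 2}"

end

theory Submission
  imports Defs "HOL-Real_Asymp.Real_Asymp"
begin

text \<open>Truncate each \<open>V\<^sub>i\<close> at level \<open>c\<close>, writing \<open>V\<^sub>i = Y\<^sub>i + Z\<^sub>i\<close> with
  \<open>Y\<^sub>i = V\<^sub>i 1{|V\<^sub>i| \<le> c}\<close>. The centred truncations \<open>Y\<^sub>i - E Y\<^sub>i\<close> are independent, so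
  they are orthogonal in \<open>L\<^sup>2\<close>, and \<open>E Y\<^sub>i\<^sup>2 \<le> c E|V\<^sub>i| \<le> 3c\<close>; hence
  \<open>E|\<Sum> a\<^sub>i (Y\<^sub>i - E Y\<^sub>i)| \<le> sqrt (3c \<Sum> a\<^sub>i\<^sup>2)\<close>. The remainders satisfy
  \<open>E|Z\<^sub>i| \<le> E|V\<^sub>i|\<^bsup>1+\<gamma>\<^esup> / c\<^sup>\<gamma> \<le> 2 / c\<^sup>\<gamma>\<close>, and \<open>|E Y\<^sub>i| = |E Z\<^sub>i|\<close> because \<open>E V\<^sub>i = 0\<close>,
  so \<open>E|\<Sum> a\<^sub>i (Z\<^sub>i + E Y\<^sub>i)| \<le> 4 c\<^sup>-\<^sup>\<gamma> \<Sum> |a\<^sub>i|\<close>. Since \<open>\<Sum> a\<^sub>i\<^sup>2 \<le> 4/n\<close> forces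
  \<open>\<Sum> |a\<^sub>i| \<le> 2\<close>, the choice \<open>c = sqrt n\<close> bounds the expectation by
  \<open>sqrt (12 / sqrt n) + 8 n\<^bsup>-\<gamma>/2\<^esup>\<close> uniformly over the distributions.\<close>

lemma sum_abs_le_sqrt_card_mult_sum_squares:
  fixes a :: "'i \<Rightarrow> real"
  shows "(\<Sum>i\<in>I. \<bar>a i\<bar>) \<le> sqrt (card I * (\<Sum>i\<in>I. (a i)\<^sup>2))"
  using sum_squared_le_sum_of_squares[of "\<lambda>i. \<bar>a i\<bar>" I] by (intro real_le_rsqrt) (simp add: mult.commute)

lemma (in prob_space) expectation_abs_le_sqrt_expectation_square:
  fixes f :: "'a \<Rightarrow> real"
  assumes f: "f \<in> borel_measurable M" and f_sq: "integrable M (\<lambda>x. (f x)\<^sup>2)"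
  shows "expectation (\<lambda>x. \<bar>f x\<bar>) \<le> sqrt (expectation (\<lambda>x. (f x)\<^sup>2))"
proof (rule real_le_rsqrt)
  have "integrable M (\<lambda>x. \<bar>f x\<bar>)"
    using square_integrable_imp_integrable[OF f f_sq] by simp
  then have "variance (\<lambda>x. \<bar>f x\<bar>) = expectation (\<lambda>x. (f x)\<^sup>2) - (expectation (\<lambda>x. \<bar>f x\<bar>))\<^sup>2"
    using variance_eq[of "\<lambda>x. \<bar>f x\<bar>"] f_sq by simp
  then show "(expectation (\<lambda>x. \<bar>f x\<bar>))\<^sup>2 \<le> expectation (\<lambda>x. (f x)\<^sup>2)"
    using variance_positive[of "\<lambda>x. \<bar>f x\<bar>"] by linarith
qed

lemma
  fixes f :: "'a \<Rightarrow> 'b::{banach, second_countable_topology}"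
  assumes M: "\<And>k. k \<in> I \<Longrightarrow> prob_space (M k)" and i: "i \<in> I"
    and f: "f \<in> borel_measurable (M i)"
  shows integral_PiM_component: "(\<integral>v. f (v i) \<partial>PiM I M) = integral\<^sup>L (M i) f"
    and integrable_PiM_component_iff: "integrable (PiM I M) (\<lambda>v. f (v i)) \<longleftrightarrow> integrable (M i) f"
proof -
  have "distr (PiM I M) (M i) (\<lambda>v. v i) = M i"
    by (rule distr_PiM_component[OF M i])
  then show "(\<integral>v. f (v i) \<partial>PiM I M) = integral\<^sup>L (M i) f"
    and "integrable (PiM I M) (\<lambda>v. f (v i)) \<longleftrightarrow> integrable (M i) f"
    using integral_distr[OF measurable_component_singleton[OF i, of M] f]
      integrable_distr_eq[OF measurable_component_singleton[OF i, of M] f]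
    by simp_all
qed

lemma
  fixes f :: "'i \<Rightarrow> 'a \<Rightarrow> 'b::{real_normed_field, banach, second_countable_topology}"
  assumes I: "finite I" and J: "J \<subseteq> I" and M: "\<And>k. k \<in> I \<Longrightarrow> prob_space (M k)"
    and f: "\<And>k. k \<in> J \<Longrightarrow> integrable (M k) (f k)"
  shows integrable_PiM_prod_components: "integrable (PiM I M) (\<lambda>v. \<Prod>k\<in>J. f k (v k))"
    and integral_PiM_prod_components:
      "(\<integral>v. (\<Prod>k\<in>J. f k (v k)) \<partial>PiM I M) = (\<Prod>k\<in>J. integral\<^sup>L (M k) (f k))"
proof -
  \<comment> \<open>The library's product lemmas need a probability space at every index, so \<open>M\<close> is
    extended outside \<open>I\<close> by a point mass and \<open>f\<close> outside \<open>J\<close> by the constant \<open>1\<close>.\<close>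
  define M' where "M' k = (if k \<in> I then M k else return (count_space UNIV) undefined)" for k
  define F where "F k = (\<lambda>x. if k \<in> J then f k x else 1)" for k
  have M': "prob_space (M' k)" for k
    by (simp add: M'_def M prob_space_return)
  interpret product_prob_space M'
    by (simp add: product_prob_space_def product_prob_space_axioms_def product_sigma_finite_def
        prob_space_imp_sigma_finite M')
  have PiM_eq: "PiM I M = PiM I M'"
    by (rule PiM_cong) (simp_all add: M'_def)
  have F_int: "integrable (M' k) (F k)" if "k \<in> I" for k
  proof (cases "k \<in> J")
    case False
    interpret prob_space "M k"
      using M that .
    show ?thesis
      using False that by (simp add: F_def M'_def)
  qed (use that f in \<open>simp add: F_def M'_def\<close>)
  have prod_eq: "(\<Prod>k\<in>I. F k (v k)) = (\<Prod>k\<in>J. f k (v k))" for v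
    using I J by (simp add: F_def prod.If_cases Int_absorb1)
  have "integral\<^sup>L (M' k) (F k) = (if k \<in> J then integral\<^sup>L (M k) (f k) else 1)" if "k \<in> I" for k
    using that prob_space.prob_space[OF M[OF that]] by (simp add: F_def M'_def)
  then have int_eq: "(\<Prod>k\<in>I. integral\<^sup>L (M' k) (F k)) = (\<Prod>k\<in>J. integral\<^sup>L (M k) (f k))"
    using I J by (simp add: prod.If_cases Int_absorb1)
  show "integrable (PiM I M) (\<lambda>v. \<Prod>k\<in>J. f k (v k))"
    using product_integrable_prod[OF I F_int] by (simp add: PiM_eq prod_eq)
  show "(\<integral>v. (\<Prod>k\<in>J. f k (v k)) \<partial>PiM I M) = (\<Prod>k\<in>J. integral\<^sup>L (M k) (f k))"
    using product_integral_prod[OF I F_int] by (simp add: PiM_eq prod_eq int_eq)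
qed

lemma
  fixes f :: "'i \<Rightarrow> 'a \<Rightarrow> real"
  assumes I: "finite I" and M: "\<And>k. k \<in> I \<Longrightarrow> prob_space (M k)"
    and f: "\<And>k. k \<in> I \<Longrightarrow> integrable (M k) (f k)"
  shows integrable_PiM_sum_components: "integrable (PiM I M) (\<lambda>v. \<Sum>k\<in>I. f k (v k))"
    and integral_abs_PiM_sum_components_le:
      "(\<integral>v. \<bar>\<Sum>k\<in>I. f k (v k)\<bar> \<partial>PiM I M) \<le> (\<Sum>k\<in>I. \<integral>x. \<bar>f k x\<bar> \<partial>M k)"
proof -
  have f_meas: "f k \<in> borel_measurable (M k)" if "k \<in> I" for k
    using f[OF that] by (rule borel_measurable_integrable)
  have comp_int: "integrable (PiM I M) (\<lambda>v. f k (v k))" if "k \<in> I" for k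
    using integrable_PiM_component_iff[where M=M, OF M that f_meas[OF that]] f[OF that] by simp
  then show "integrable (PiM I M) (\<lambda>v. \<Sum>k\<in>I. f k (v k))"
    by auto
  have "(\<integral>v. \<bar>\<Sum>k\<in>I. f k (v k)\<bar> \<partial>PiM I M) \<le> (\<integral>v. (\<Sum>k\<in>I. \<bar>f k (v k)\<bar>) \<partial>PiM I M)"
    using comp_int by (intro integral_mono sum_abs) auto
  also have "\<dots> = (\<Sum>k\<in>I. \<integral>x. \<bar>f k x\<bar> \<partial>M k)"
    using comp_int integral_PiM_component[where M=M, OF M _ borel_measurable_abs[OF f_meas]]
    by (simp add: Bochner_Integration.integral_sum)
  finally show "(\<integral>v. \<bar>\<Sum>k\<in>I. f k (v k)\<bar> \<partial>PiM I M) \<le> (\<Sum>k\<in>I. \<integral>x. \<bar>f k x\<bar> \<partial>M k)" .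
qed

lemma
  fixes f :: "'i \<Rightarrow> 'a \<Rightarrow> real"
  assumes I: "finite I" and M: "\<And>k. k \<in> I \<Longrightarrow> prob_space (M k)"
    and f_meas: "\<And>k. k \<in> I \<Longrightarrow> f k \<in> borel_measurable (M k)"
    and f_sq: "\<And>k. k \<in> I \<Longrightarrow> integrable (M k) (\<lambda>x. (f k x)\<^sup>2)"
    and f_centered: "\<And>k. k \<in> I \<Longrightarrow> integral\<^sup>L (M k) (f k) = 0"
  shows integrable_PiM_square_sum_components:
      "integrable (PiM I M) (\<lambda>v. (\<Sum>k\<in>I. f k (v k))\<^sup>2)"
    and integral_PiM_square_sum_centered_components:
      "(\<integral>v. (\<Sum>k\<in>I. f k (v k))\<^sup>2 \<partial>PiM I M) = (\<Sum>k\<in>I. \<integral>x. (f k x)\<^sup>2 \<partial>M k)"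
proof -
  have f_int: "integrable (M k) (f k)" if "k \<in> I" for k
    using finite_measure.square_integrable_imp_integrable[OF prob_space.finite_measure[OF M] f_meas f_sq]
      that by blast
  have square: "(\<Sum>k\<in>I. f k (v k))\<^sup>2 = (\<Sum>i\<in>I. \<Sum>j\<in>I. f i (v i) * f j (v j))" for v
    by (simp add: power2_eq_square sum_product)
  have cross: "integrable (PiM I M) (\<lambda>v. f i (v i) * f j (v j)) \<and>
      (\<integral>v. f i (v i) * f j (v j) \<partial>PiM I M) = (if i = j then \<integral>x. (f i x)\<^sup>2 \<partial>M i else 0)"
    if ij: "i \<in> I" "j \<in> I" for i j
  proof (cases "i = j")
    case True
    have sq_meas: "(\<lambda>x. (f i x)\<^sup>2) \<in> borel_measurable (M i)"
      using f_meas[OF ij(1)] by measurable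
    show ?thesis
      using True integral_PiM_component[where M=M, OF M ij(1) sq_meas]
        integrable_PiM_component_iff[where M=M, OF M ij(1) sq_meas] f_sq[OF ij(1)]
      by (simp add: power2_eq_square)
  next
    case False
    have sub: "{i, j} \<subseteq> I" and int: "\<And>k. k \<in> {i, j} \<Longrightarrow> integrable (M k) (f k)"
      using ij f_int by auto
    show ?thesis
      using False ij f_centered integrable_PiM_prod_components[where M=M, OF I sub M int]
        integral_PiM_prod_components[where M=M, OF I sub M int]
      by simp
  qed
  show "integrable (PiM I M) (\<lambda>v. (\<Sum>k\<in>I. f k (v k))\<^sup>2)"
    unfolding square using cross by (intro Bochner_Integration.integrable_sum) blast
  have "(\<integral>v. (\<Sum>k\<in>I. f k (v k))\<^sup>2 \<partial>PiM I M)
      = (\<Sum>i\<in>I. \<Sum>j\<in>I. if i = j then \<integral>x. (f i x)\<^sup>2 \<partial>M i else 0)"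
    unfolding square using cross by (simp add: Bochner_Integration.integral_sum)
  also have "\<dots> = (\<Sum>k\<in>I. \<integral>x. (f k x)\<^sup>2 \<partial>M k)"
    using I by simp
  finally show "(\<integral>v. (\<Sum>k\<in>I. f k (v k))\<^sup>2 \<partial>PiM I M)
      = (\<Sum>k\<in>I. \<integral>x. (f k x)\<^sup>2 \<partial>M k)" .
qed

lemma integral_abs_PiM_sum_centered_components_le:
  fixes f :: "'i \<Rightarrow> 'a \<Rightarrow> real"
  assumes I: "finite I" and M: "\<And>k. k \<in> I \<Longrightarrow> prob_space (M k)"
    and f_meas: "\<And>k. k \<in> I \<Longrightarrow> f k \<in> borel_measurable (M k)"
    and f_sq: "\<And>k. k \<in> I \<Longrightarrow> integrable (M k) (\<lambda>x. (f k x)\<^sup>2)"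
    and f_centered: "\<And>k. k \<in> I \<Longrightarrow> integral\<^sup>L (M k) (f k) = 0"
  shows "(\<integral>v. \<bar>\<Sum>k\<in>I. f k (v k)\<bar> \<partial>PiM I M)
    \<le> sqrt (\<Sum>k\<in>I. \<integral>x. (f k x)\<^sup>2 \<partial>M k)"
proof -
  interpret PiM: prob_space "PiM I M"
    by (rule prob_space_PiM) (rule M)
  have meas: "(\<lambda>v. \<Sum>k\<in>I. f k (v k)) \<in> borel_measurable (PiM I M)"
  proof (intro borel_measurable_sum)
    fix k assume k: "k \<in> I"
    show "(\<lambda>v. f k (v k)) \<in> borel_measurable (PiM I M)"
      by (rule measurable_compose[OF measurable_component_singleton[OF k, of M] f_meas[OF k]])
  qed
  show ?thesis
    using PiM.expectation_abs_le_sqrt_expectation_square[OF meas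
        integrable_PiM_square_sum_components[where M=M, OF I M f_meas f_sq f_centered]]
      integral_PiM_square_sum_centered_components[where M=M, OF I M f_meas f_sq f_centered]
    by simp
qed

lemma dist_classD:
  assumes "P \<in> dist_class s"
  shows "prob_space P" and "sets P = sets borel" and "integrable P (\<lambda>x. x)"
    and "integral\<^sup>L P (\<lambda>x. x) = 0"
    and "integrable P (\<lambda>x. \<bar>x\<bar> powr s)" and "(\<integral>x. \<bar>x\<bar> powr s \<partial>P) \<le> 2"
proof -
  show sets: "sets P = sets borel"
    using assms by (simp add: dist_class_def)
  have moment: "(\<integral>\<^sup>+x. ennreal (\<bar>x\<bar> powr s) \<partial>P) \<le> 2"
    using assms by (simp add: dist_class_def)
  have meas: "(\<lambda>x. \<bar>x\<bar> powr s) \<in> borel_measurable P"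
    unfolding measurable_cong_sets[OF sets refl] by measurable
  show int: "integrable P (\<lambda>x. \<bar>x\<bar> powr s)"
    using moment by (intro integrableI_bounded meas) (simp add: order_le_less_trans)
  have "ennreal (\<integral>x. \<bar>x\<bar> powr s \<partial>P) \<le> 2"
    using moment by (simp add: nn_integral_eq_integral[OF int])
  then show "(\<integral>x. \<bar>x\<bar> powr s \<partial>P) \<le> 2"
    by (metis ennreal_le_iff ennreal_numeral zero_le_numeral)
  show "prob_space P" "integrable P (\<lambda>x. x)" "integral\<^sup>L P (\<lambda>x. x) = 0"
    using assms by (simp_all add: dist_class_def)
qed

definition trunc :: "real \<Rightarrow> real \<Rightarrow> real" where
  "trunc c x = (if \<bar>x\<bar> \<le> c then x else 0)"

lemma borel_measurable_trunc [measurable]: "trunc c \<in> borel_measurable borel"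
  unfolding trunc_def by measurable

lemma abs_trunc_le: "0 \<le> c \<Longrightarrow> \<bar>trunc c x\<bar> \<le> c"
  by (simp add: trunc_def)

lemma abs_sub_trunc_le_powr:
  fixes c \<gamma> x :: real
  assumes "0 < c" and "0 \<le> \<gamma>"
  shows "\<bar>x - trunc c x\<bar> \<le> \<bar>x\<bar> powr (1 + \<gamma>) / c powr \<gamma>"
proof (cases "\<bar>x\<bar> \<le> c")
  case False
  then have "\<bar>x\<bar> * c powr \<gamma> \<le> \<bar>x\<bar> * \<bar>x\<bar> powr \<gamma>"
    using assms by (intro mult_left_mono powr_mono2) auto
  also have "\<dots> = \<bar>x\<bar> powr (1 + \<gamma>)"
    using False assms by (simp add: powr_add)
  finally show ?thesis
    using False assms by (simp add: trunc_def pos_le_divide_eq)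
qed (simp add: trunc_def)

lemma trunc_square_le:
  fixes c \<gamma> x :: real
  assumes "0 \<le> c" and "0 \<le> \<gamma>"
  shows "(trunc c x)\<^sup>2 \<le> c * (1 + \<bar>x\<bar> powr (1 + \<gamma>))"
proof -
  have "\<bar>x\<bar> \<le> 1 + \<bar>x\<bar> powr (1 + \<gamma>)"
  proof (cases "\<bar>x\<bar> \<le> 1")
    case False
    then have "\<bar>x\<bar> powr 1 \<le> \<bar>x\<bar> powr (1 + \<gamma>)"
      using assms by (intro powr_mono) auto
    then show ?thesis
      using False by simp
  qed (simp add: add_increasing2)
  moreover have "(trunc c x)\<^sup>2 \<le> c * \<bar>x\<bar>"
  proof (cases "\<bar>x\<bar> \<le> c")
    case True
    then have "\<bar>x\<bar> * \<bar>x\<bar> \<le> c * \<bar>x\<bar>"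
      by (intro mult_right_mono) auto
    then show ?thesis
      using True by (simp add: trunc_def power2_eq_square)
  qed (use assms in \<open>simp add: trunc_def\<close>)
  ultimately show ?thesis
    using assms by (meson mult_left_mono order_trans)
qed

lemma
  assumes P: "P \<in> dist_class (1 + \<gamma>)" and \<gamma>: "0 \<le> \<gamma>" and c: "0 < c"
  shows integrable_trunc_dist_class: "integrable P (trunc c)"
    and integrable_trunc_remainder_dist_class:
      "integrable P (\<lambda>x. x - trunc c x + integral\<^sup>L P (trunc c))"
    and integral_abs_trunc_remainder_le:
      "(\<integral>x. \<bar>x - trunc c x + integral\<^sup>L P (trunc c)\<bar> \<partial>P) \<le> 4 / c powr \<gamma>"
proof -
  interpret prob_space P
    using dist_classD(1)[OF P] .
  note id_int = dist_classD(3)[OF P] and moment_int = dist_classD(5)[OF P]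
  have trunc_meas: "trunc c \<in> borel_measurable P"
    unfolding measurable_cong_sets[OF dist_classD(2)[OF P] refl] by measurable
  show trunc_int: "integrable P (trunc c)"
    using c trunc_meas abs_trunc_le[of c] by (intro integrable_const_bound[where B=c]) auto
  then show "integrable P (\<lambda>x. x - trunc c x + integral\<^sup>L P (trunc c))"
    using id_int by auto
  have "(\<integral>x. \<bar>x - trunc c x\<bar> \<partial>P) \<le> (\<integral>x. \<bar>x\<bar> powr (1 + \<gamma>) / c powr \<gamma> \<partial>P)"
    using abs_sub_trunc_le_powr[OF c \<gamma>] id_int trunc_int moment_int by (intro integral_mono) auto
  also have "\<dots> \<le> 2 / c powr \<gamma>"
    using dist_classD(6)[OF P] by (simp add: divide_right_mono)
  finally have tail: "(\<integral>x. \<bar>x - trunc c x\<bar> \<partial>P) \<le> 2 / c powr \<gamma>" .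
  have "integral\<^sup>L P (trunc c) = - (\<integral>x. x - trunc c x \<partial>P)"
    using dist_classD(4)[OF P] id_int trunc_int by simp
  then have mean: "\<bar>integral\<^sup>L P (trunc c)\<bar> \<le> (\<integral>x. \<bar>x - trunc c x\<bar> \<partial>P)"
    using integral_abs_bound[of P "\<lambda>x. x - trunc c x"] by simp
  have "(\<integral>x. \<bar>x - trunc c x + integral\<^sup>L P (trunc c)\<bar> \<partial>P)
      \<le> (\<integral>x. \<bar>x - trunc c x\<bar> + \<bar>integral\<^sup>L P (trunc c)\<bar> \<partial>P)"
    using id_int trunc_int by (intro integral_mono) auto
  also have "\<dots> = (\<integral>x. \<bar>x - trunc c x\<bar> \<partial>P) + \<bar>integral\<^sup>L P (trunc c)\<bar>"
    using id_int trunc_int by (simp add: prob_space)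
  finally show "(\<integral>x. \<bar>x - trunc c x + integral\<^sup>L P (trunc c)\<bar> \<partial>P) \<le> 4 / c powr \<gamma>"
    using tail mean by linarith
qed

lemma
  assumes P: "P \<in> dist_class (1 + \<gamma>)" and \<gamma>: "0 \<le> \<gamma>" and c: "0 < c"
  shows integrable_centered_trunc_square:
      "integrable P (\<lambda>x. (trunc c x - integral\<^sup>L P (trunc c))\<^sup>2)"
    and integral_centered_trunc_square_le:
      "(\<integral>x. (trunc c x - integral\<^sup>L P (trunc c))\<^sup>2 \<partial>P) \<le> 3 * c"
proof -
  interpret prob_space P
    using dist_classD(1)[OF P] .
  have trunc_meas: "trunc c \<in> borel_measurable P"
    unfolding measurable_cong_sets[OF dist_classD(2)[OF P] refl] by measurable
  have bounded_square: "integrable P (\<lambda>x. (trunc c x - m)\<^sup>2)" for m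
  proof (rule integrable_const_bound[where B="(c + \<bar>m\<bar>)\<^sup>2"])
    show "AE x in P. norm ((trunc c x - m)\<^sup>2) \<le> (c + \<bar>m\<bar>)\<^sup>2"
    proof (intro AE_I2)
      fix x
      have "\<bar>trunc c x - m\<bar> \<le> \<bar>c + \<bar>m\<bar>\<bar>"
        using c abs_trunc_le[of c x] by linarith
      then show "norm ((trunc c x - m)\<^sup>2) \<le> (c + \<bar>m\<bar>)\<^sup>2"
        by (simp add: abs_le_square_iff)
    qed
  qed (use trunc_meas in measurable)
  then show "integrable P (\<lambda>x. (trunc c x - integral\<^sup>L P (trunc c))\<^sup>2)" .
  have trunc_sq_int: "integrable P (\<lambda>x. (trunc c x)\<^sup>2)"
    using bounded_square[of 0] by simp
  have "(\<integral>x. (trunc c x - integral\<^sup>L P (trunc c))\<^sup>2 \<partial>P) \<le> (\<integral>x. (trunc c x)\<^sup>2 \<partial>P)"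
    using variance_eq[OF integrable_trunc_dist_class[OF P \<gamma> c] trunc_sq_int] by simp
  also have "\<dots> \<le> (\<integral>x. c * (1 + \<bar>x\<bar> powr (1 + \<gamma>)) \<partial>P)"
    using trunc_square_le[of c \<gamma>] c \<gamma> dist_classD(5)[OF P] trunc_sq_int by (intro integral_mono) auto
  also have "\<dots> \<le> 3 * c"
    using dist_classD(5,6)[OF P] c by (simp add: prob_space)
  finally show "(\<integral>x. (trunc c x - integral\<^sup>L P (trunc c))\<^sup>2 \<partial>P) \<le> 3 * c" .
qed

lemma integral_abs_sum_centered_trunc_le:
  fixes a :: "'i \<Rightarrow> real"
  assumes I: "finite I" and P: "\<And>i. i \<in> I \<Longrightarrow> P i \<in> dist_class (1 + \<gamma>)"
    and \<gamma>: "0 \<le> \<gamma>" and c: "0 < c"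
  shows "(\<integral>v. \<bar>\<Sum>i\<in>I. a i * (trunc c (v i) - integral\<^sup>L (P i) (trunc c))\<bar> \<partial>PiM I P)
    \<le> sqrt (3 * c * (\<Sum>i\<in>I. (a i)\<^sup>2))"
proof -
  define f where "f i = (\<lambda>x. a i * (trunc c x - integral\<^sup>L (P i) (trunc c)))" for i
  have prob: "\<And>i. i \<in> I \<Longrightarrow> prob_space (P i)"
    using dist_classD(1)[OF P] .
  have f_meas: "f i \<in> borel_measurable (P i)" if "i \<in> I" for i
    unfolding f_def measurable_cong_sets[OF dist_classD(2)[OF P[OF that]] refl] by measurable
  have f_sq: "(f i x)\<^sup>2 = (a i)\<^sup>2 * (trunc c x - integral\<^sup>L (P i) (trunc c))\<^sup>2" for i x
    by (simp add: f_def power_mult_distrib)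
  have f_sq_int: "integrable (P i) (\<lambda>x. (f i x)\<^sup>2)" if "i \<in> I" for i
    unfolding f_sq using integrable_centered_trunc_square[OF P[OF that] \<gamma> c] by simp
  have f_centered: "integral\<^sup>L (P i) (f i) = 0" if "i \<in> I" for i
  proof -
    interpret prob_space "P i"
      using prob[OF that] .
    show ?thesis
      using integrable_trunc_dist_class[OF P[OF that] \<gamma> c] by (simp add: f_def prob_space)
  qed
  have f_var: "(\<integral>x. (f i x)\<^sup>2 \<partial>P i) \<le> 3 * c * (a i)\<^sup>2" if "i \<in> I" for i
  proof -
    have "(a i)\<^sup>2 * (\<integral>x. (trunc c x - integral\<^sup>L (P i) (trunc c))\<^sup>2 \<partial>P i) \<le> (a i)\<^sup>2 * (3 * c)"
      using integral_centered_trunc_square_le[OF P[OF that] \<gamma> c] by (intro mult_left_mono) auto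
    then show ?thesis
      by (simp add: f_sq mult_ac)
  qed
  have "(\<integral>v. \<bar>\<Sum>i\<in>I. f i (v i)\<bar> \<partial>PiM I P) \<le> sqrt (\<Sum>i\<in>I. \<integral>x. (f i x)\<^sup>2 \<partial>P i)"
    by (rule integral_abs_PiM_sum_centered_components_le[OF I prob f_meas f_sq_int f_centered])
  also have "\<dots> \<le> sqrt (3 * c * (\<Sum>i\<in>I. (a i)\<^sup>2))"
    using f_var by (simp add: sum_mono sum_distrib_left)
  finally show ?thesis
    by (simp add: f_def)
qed

lemma nn_integral_abs_weighted_sum_dist_class_le:
  fixes a :: "'i \<Rightarrow> real"
  assumes I: "finite I" and P: "\<And>i. i \<in> I \<Longrightarrow> P i \<in> dist_class (1 + \<gamma>)"
    and \<gamma>: "0 \<le> \<gamma>" and c: "0 < c"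
  shows "(\<integral>\<^sup>+v. ennreal \<bar>\<Sum>i\<in>I. a i * v i\<bar> \<partial>PiM I P)
    \<le> ennreal (sqrt (3 * c * (\<Sum>i\<in>I. (a i)\<^sup>2)) + 4 / c powr \<gamma> * (\<Sum>i\<in>I. \<bar>a i\<bar>))"
proof -
  define A where "A = (\<lambda>v. \<Sum>i\<in>I. a i * (trunc c (v i) - integral\<^sup>L (P i) (trunc c)))"
  define B where "B = (\<lambda>v. \<Sum>i\<in>I. a i * (v i - trunc c (v i) + integral\<^sup>L (P i) (trunc c)))"
  have prob: "\<And>i. i \<in> I \<Longrightarrow> prob_space (P i)"
    using dist_classD(1)[OF P] .
  have remainder_int: "integrable (P i) (\<lambda>x. a i * (x - trunc c x + integral\<^sup>L (P i) (trunc c)))"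
    if "i \<in> I" for i
    using integrable_trunc_remainder_dist_class[OF P[OF that] \<gamma> c] by simp
  have A_int: "integrable (PiM I P) A"
    unfolding A_def
  proof (rule integrable_PiM_sum_components[OF I prob])
    fix i assume i: "i \<in> I"
    show "integrable (P i) (\<lambda>x. a i * (trunc c x - integral\<^sup>L (P i) (trunc c)))"
      by (intro integrable_mult_right Bochner_Integration.integrable_diff
          integrable_trunc_dist_class[OF P[OF i] \<gamma> c]
          finite_measure.integrable_const[OF prob_space.finite_measure[OF prob[OF i]]])
  qed
  have B_int: "integrable (PiM I P) B"
    unfolding B_def by (rule integrable_PiM_sum_components[OF I prob remainder_int])
  have "(\<integral>v. \<bar>B v\<bar> \<partial>PiM I P)
      \<le> (\<Sum>i\<in>I. \<integral>x. \<bar>a i * (x - trunc c x + integral\<^sup>L (P i) (trunc c))\<bar> \<partial>P i)"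
    unfolding B_def by (rule integral_abs_PiM_sum_components_le[OF I prob remainder_int])
  also have "\<dots> \<le> (\<Sum>i\<in>I. \<bar>a i\<bar> * (4 / c powr \<gamma>))"
  proof (intro sum_mono)
    fix i assume i: "i \<in> I"
    have "(\<integral>x. \<bar>a i * (x - trunc c x + integral\<^sup>L (P i) (trunc c))\<bar> \<partial>P i)
        = \<bar>a i\<bar> * (\<integral>x. \<bar>x - trunc c x + integral\<^sup>L (P i) (trunc c)\<bar> \<partial>P i)"
      by (simp add: abs_mult)
    also have "\<dots> \<le> \<bar>a i\<bar> * (4 / c powr \<gamma>)"
      by (rule mult_left_mono[OF integral_abs_trunc_remainder_le[OF P[OF i] \<gamma> c] abs_ge_zero])
    finally show "(\<integral>x. \<bar>a i * (x - trunc c x + integral\<^sup>L (P i) (trunc c))\<bar> \<partial>P i)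
        \<le> \<bar>a i\<bar> * (4 / c powr \<gamma>)" .
  qed
  also have "\<dots> = 4 / c powr \<gamma> * (\<Sum>i\<in>I. \<bar>a i\<bar>)"
    by (metis sum_distrib_right mult.commute)
  finally have B_le: "(\<integral>v. \<bar>B v\<bar> \<partial>PiM I P) \<le> 4 / c powr \<gamma> * (\<Sum>i\<in>I. \<bar>a i\<bar>)" .
  have split: "(\<Sum>i\<in>I. a i * v i) = A v + B v" for v
    by (simp add: A_def B_def sum.distrib[symmetric] algebra_simps)
  have "(\<integral>\<^sup>+v. ennreal \<bar>\<Sum>i\<in>I. a i * v i\<bar> \<partial>PiM I P)
      \<le> (\<integral>\<^sup>+v. ennreal (\<bar>A v\<bar> + \<bar>B v\<bar>) \<partial>PiM I P)"
    by (intro nn_integral_mono ennreal_leI) (simp add: split abs_triangle_ineq)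
  also have "\<dots> = ennreal (\<integral>v. \<bar>A v\<bar> + \<bar>B v\<bar> \<partial>PiM I P)"
    using A_int B_int by (intro nn_integral_eq_integral) auto
  also have "\<dots> \<le> ennreal (sqrt (3 * c * (\<Sum>i\<in>I. (a i)\<^sup>2)) + 4 / c powr \<gamma> * (\<Sum>i\<in>I. \<bar>a i\<bar>))"
    using A_int B_int B_le integral_abs_sum_centered_trunc_le[where a=a, OF I P \<gamma> c]
    by (intro ennreal_leI) (simp add: A_def add_mono)
  finally show ?thesis .
qed

lemma nn_integral_abs_weighted_sum_le_truncation_bound:
  fixes a :: "nat \<Rightarrow> real"
  assumes n: "1 \<le> n" and sq: "(\<Sum>i=1..n. (a i)\<^sup>2) \<le> 4 / real n" and \<gamma>: "0 \<le> \<gamma>"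
    and P: "\<And>i. i \<in> {1..n} \<Longrightarrow> P i \<in> dist_class (1 + \<gamma>)"
  shows "(\<integral>\<^sup>+v. ennreal \<bar>\<Sum>i=1..n. a i * v i\<bar> \<partial>PiM {1..n} P)
    \<le> ennreal (sqrt (12 / sqrt (real n)) + 8 / sqrt (real n) powr \<gamma>)"
proof -
  have "(\<Sum>i=1..n. \<bar>a i\<bar>) \<le> sqrt (real n * (\<Sum>i=1..n. (a i)\<^sup>2))"
    using sum_abs_le_sqrt_card_mult_sum_squares[of a "{1..n}"] by simp
  also have "\<dots> \<le> sqrt (real n * (4 / real n))"
    using sq by (intro real_sqrt_le_mono mult_left_mono) auto
  also have "\<dots> = 2"
    using n by simp
  finally have "4 * (\<Sum>i=1..n. \<bar>a i\<bar>) \<le> 8"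
    by simp
  then have abs_term: "4 / sqrt (real n) powr \<gamma> * (\<Sum>i=1..n. \<bar>a i\<bar>) \<le> 8 / sqrt (real n) powr \<gamma>"
    using divide_right_mono[of "4 * (\<Sum>i=1..n. \<bar>a i\<bar>)" 8 "sqrt (real n) powr \<gamma>"] by simp
  have "3 * sqrt (real n) * (\<Sum>i=1..n. (a i)\<^sup>2) \<le> 3 * sqrt (real n) * (4 / real n)"
    using sq by (intro mult_left_mono) auto
  also have "\<dots> = 12 / sqrt (real n)"
    using n by (simp add: field_simps)
  finally have real_bound: "sqrt (3 * sqrt (real n) * (\<Sum>i=1..n. (a i)\<^sup>2))
      + 4 / sqrt (real n) powr \<gamma> * (\<Sum>i=1..n. \<bar>a i\<bar>)
      \<le> sqrt (12 / sqrt (real n)) + 8 / sqrt (real n) powr \<gamma>"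
    using abs_term by (intro add_mono real_sqrt_le_mono)
  have "(\<integral>\<^sup>+v. ennreal \<bar>\<Sum>i=1..n. a i * v i\<bar> \<partial>PiM {1..n} P)
      \<le> ennreal (sqrt (3 * sqrt (real n) * (\<Sum>i=1..n. (a i)\<^sup>2))
        + 4 / sqrt (real n) powr \<gamma> * (\<Sum>i=1..n. \<bar>a i\<bar>))"
    using n by (intro nn_integral_abs_weighted_sum_dist_class_le P \<gamma>) auto
  also have "\<dots> \<le> ennreal (sqrt (12 / sqrt (real n)) + 8 / sqrt (real n) powr \<gamma>)"
    using real_bound by (rule ennreal_leI)
  finally show ?thesis .
qed

lemma tendsto_truncation_bound:
  assumes "0 < \<gamma>"
  shows "(\<lambda>n. sqrt (12 / sqrt (real n)) + 8 / sqrt (real n) powr \<gamma>) \<longlonglongrightarrow> 0"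
proof -
  have "(\<lambda>n. sqrt (real n) powr (-\<gamma>)) \<longlonglongrightarrow> 0"
    by (rule tendsto_neg_powr) (use assms in simp, real_asymp)
  then have "(\<lambda>n. 8 * sqrt (real n) powr (-\<gamma>)) \<longlonglongrightarrow> 0"
    by (rule tendsto_mult_right_zero)
  moreover have "8 / x powr \<gamma> = 8 * x powr (-\<gamma>)" for x :: real
    by (simp add: powr_minus divide_inverse)
  moreover have "(\<lambda>n. sqrt (12 / sqrt (real n))) \<longlonglongrightarrow> 0"
    by real_asymp
  ultimately show ?thesis
    using tendsto_add_zero by fastforce
qed

theorem lemmaA22:
  fixes a :: "nat \<Rightarrow> nat \<Rightarrow> real" and \<gamma> :: real
  assumes "\<And>n. n \<ge> 1 \<Longrightarrow> (\<Sum>i=1..n. \<bar>a n i\<bar>^2) \<le> 4 / real n"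
    and "\<gamma> > 0"
  shows "(\<lambda>n. SUP P \<in> Pi {1..n} (\<lambda>_. dist_class (1 + \<gamma>)).
            \<integral>\<^sup>+ v. ennreal \<bar>\<Sum>i=1..n. a n i * (v i - (\<integral>y. y \<partial>(P i)))\<bar>
              \<partial>(PiM {1..n} P))
         \<longlonglongrightarrow> 0"
proof -
  let ?bound = "\<lambda>n. sqrt (12 / sqrt (real n)) + 8 / sqrt (real n) powr \<gamma>"
  have lim: "(\<lambda>n. ennreal (?bound n)) \<longlonglongrightarrow> 0"
    using tendsto_ennrealI[OF tendsto_truncation_bound[OF assms(2)]] by simp
  have bound: "(\<integral>\<^sup>+ v. ennreal \<bar>\<Sum>i=1..n. a n i * (v i - (\<integral>y. y \<partial>(P i)))\<bar> \<partial>(PiM {1..n} P))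
      \<le> ennreal (?bound n)" if n: "1 \<le> n" and P: "P \<in> Pi {1..n} (\<lambda>_. dist_class (1 + \<gamma>))" for n P
  proof -
    have Pi: "\<And>i. i \<in> {1..n} \<Longrightarrow> P i \<in> dist_class (1 + \<gamma>)"
      using P by auto
    have sq: "(\<Sum>i=1..n. (a n i)\<^sup>2) \<le> 4 / real n"
      using assms(1)[OF n] by simp
    have "(\<Sum>i=1..n. a n i * (v i - (\<integral>y. y \<partial>(P i)))) = (\<Sum>i=1..n. a n i * v i)" for v
      using Pi dist_classD(4) by (intro sum.cong refl) (metis diff_zero)
    then show ?thesis
      using nn_integral_abs_weighted_sum_le_truncation_bound[OF n sq _ Pi] assms(2) by simp
  qed
  show ?thesis
    using bound
    by (intro tendsto_sandwich[OF _ _ tendsto_const lim] eventually_sequentiallyI[of 1] SUP_least)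
      (simp, blast)
qed

end
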